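(* Let $\mathcal L^*$ be the optimal average cost of the original problem and $\mathcal L^*(N)$ the optimal average cost of the truncated problem with truncation level $N$. Then $\lim_{N\to\infty}\mathcal L^*(N)=\mathcal L^*$.
   Context: Fix $p,q\in(0,1)$, $\bar p=1-p$, $\bar q=1-q$. The source $\{X_t\}$ is a Markov chain on $\{0,1\}$ with $\Pr[X_{t+1}=1\mid X_t=0]=p$, $\Pr[X_{t+1}=0\mid X_t=1]=q$; channel i.i.d. Bernoulli with success probability $p_s\in(0,1]$, independent of the source, $p_f=1-p_s$. Actions $A_t\in\{0,1\}$ chosen from the history. Estimate dynamics: if $A_t=1$ and the transmission succeeds then $\hat X_{t+1}=X_{t+1}$, otherwise $\hat X_{t+1}=\hat X_t$. Original problem: age $\Delta_{t+1}=\Delta_t+1$ if $X_{t+1}\ne\hat X_{t+1}$, else $0$; state $S_t=(X_t,\hat X_t,\Delta_t)\in\mathcal S=\{(0,0,0),(1,1,0)\}\cup\{(1,0,\delta),(0,1,\delta):\delta\ge1\}$, $S_1=(0,0,0)$. Truncated problem with level $N$: age $\Delta_{t+1}=\min(\Delta_t+1,N)$ if $X_{t+1}\ne\hat X_{t+1}$, else $0$; state space $\mathcal S_N=\{(0,0,0),(1,1,0)\}\cup\{(1,0,\delta),(0,1,\delta):1\le\delta\le N\}$. In both, per-state cost $c(s)=\beta\delta$ for $s=(1,0,\delta)$, $(1-\beta)\delta$ for $s=(0,1,\delta)$, $0$ for synced states, $\beta\in[0,1]$; per-stage cost $\ell(s,a)=\mathbb E[c(S_{t+1})\mid S_t=s,A_t=a]+\lambda\mathbb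 1\{a=1\}$, $\lambda\ge0$; average cost $\limsup_{T\to\infty}\frac1T\sum_{t=1}^T\mathbb E^\pi[\ell(S_t,A_t)\mid S_1=(0,0,0)]$; optimal values are infima over all admissible policies. *)

theory Defs
  imports "HOL-Probability.Probability"
begin

text \<open>States (X_t, Xhat_t, Delta_t); bit 1 is encoded as True, bit 0 as False.\<close>
type_synonym st = "bool \<times> bool \<times> nat"

definition s_init :: st where "s_init = (False, False, 0)"

definition src_next :: "real \<Rightarrow> real \<Rightarrow> bool \<Rightarrow> bool pmf" where
  "src_next p q x = (if x then bernoulli_pmf (1 - q) else bernoulli_pmf p)"

text \<open>The function upd gives the new age when out of sync:
  Suc for the original problem, (\<lambda>d. min (Suc d) N) for the truncated problem.\<close>
definition trans :: "(nat \<Rightarrow> nat) \<Rightarrow> real \<Rightarrow> real \<Rightarrow> real \<Rightarrow> st \<Rightarrow> bool \<Rightarrow> st pmf" where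
  "trans upd p q ps s a =
     (case s of (x, xh, d) \<Rightarrow>
        bind_pmf (src_next p q x) (\<lambda>x'.
        bind_pmf (bernoulli_pmf ps) (\<lambda>succ.
          (let xh' = (if a \<and> succ then x' else xh)
           in return_pmf (x', xh', if x' \<noteq> xh' then upd d else 0)))))"

definition cost :: "real \<Rightarrow> st \<Rightarrow> real" where
  "cost \<beta> s = (case s of (x, xh, d) \<Rightarrow>
      if x \<and> \<not> xh then \<beta> * real d
      else if \<not> x \<and> xh then (1 - \<beta>) * real d
      else 0)"

definition stage_cost :: "(nat \<Rightarrow> nat) \<Rightarrow> real \<Rightarrow> real \<Rightarrow> real \<Rightarrow> real \<Rightarrow> real \<Rightarrow> st \<Rightarrow> bool \<Rightarrow> real" where
  "stage_cost upd p q ps \<beta> lam s a =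
     measure_pmf.expectation (trans upd p q ps s a) (cost \<beta>) + (if a then lam else 0)"

text \<open>Admissible (history-dependent, possibly randomized) policies: given the past
  state/action pairs and the current state, the probability of choosing A_t = 1.\<close>
type_synonym policy = "(st \<times> bool) list \<Rightarrow> st \<Rightarrow> real"

definition admissible :: "policy set" where
  "admissible = {\<pi>. \<forall>h s. 0 \<le> \<pi> h s \<and> \<pi> h s \<le> 1}"

text \<open>Joint law of (history (S_1,A_1),...,(S_t,A_t), current state S_{t+1}) under policy \<pi>;
  hist_pmf ... 0 is the point mass at ([], S_1).\<close>
primrec hist_pmf :: "(nat \<Rightarrow> nat) \<Rightarrow> real \<Rightarrow> real \<Rightarrow> real \<Rightarrow> policy \<Rightarrow> nat
                       \<Rightarrow> ((st \<times> bool) list \<times> st) pmf" where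
  "hist_pmf upd p q ps \<pi> 0 = return_pmf ([], s_init)"
| "hist_pmf upd p q ps \<pi> (Suc t) =
     bind_pmf (hist_pmf upd p q ps \<pi> t) (\<lambda>(h, s).
     bind_pmf (bernoulli_pmf (\<pi> h s)) (\<lambda>a.
     map_pmf (\<lambda>s'. (h @ [(s, a)], s')) (trans upd p q ps s a)))"

text \<open>Law of (S_{t+1}, A_{t+1}) (0-based index t).\<close>
definition sa_pmf :: "(nat \<Rightarrow> nat) \<Rightarrow> real \<Rightarrow> real \<Rightarrow> real \<Rightarrow> policy \<Rightarrow> nat \<Rightarrow> (st \<times> bool) pmf" where
  "sa_pmf upd p q ps \<pi> t =
     bind_pmf (hist_pmf upd p q ps \<pi> t) (\<lambda>(h, s).
       map_pmf (\<lambda>a. (s, a)) (bernoulli_pmf (\<pi> h s)))"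

definition exp_stage :: "(nat \<Rightarrow> nat) \<Rightarrow> real \<Rightarrow> real \<Rightarrow> real \<Rightarrow> real \<Rightarrow> real \<Rightarrow> policy \<Rightarrow> nat \<Rightarrow> real" where
  "exp_stage upd p q ps \<beta> lam \<pi> t =
     measure_pmf.expectation (sa_pmf upd p q ps \<pi> t)
       (\<lambda>(s, a). stage_cost upd p q ps \<beta> lam s a)"

definition avg_cost :: "(nat \<Rightarrow> nat) \<Rightarrow> real \<Rightarrow> real \<Rightarrow> real \<Rightarrow> real \<Rightarrow> real \<Rightarrow> policy \<Rightarrow> ereal" where
  "avg_cost upd p q ps \<beta> lam \<pi> =
     limsup (\<lambda>T. ereal ((\<Sum>t<T. exp_stage upd p q ps \<beta> lam \<pi> t) / real T))"

definition opt_cost :: "(nat \<Rightarrow> nat) \<Rightarrow> real \<Rightarrow> real \<Rightarrow> real \<Rightarrow> real \<Rightarrow> real \<Rightarrow> ereal" where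
  "opt_cost upd p q ps \<beta> lam = (INF \<pi>\<in>admissible. avg_cost upd p q ps \<beta> lam \<pi>)"

definition L_orig :: "real \<Rightarrow> real \<Rightarrow> real \<Rightarrow> real \<Rightarrow> real \<Rightarrow> ereal" where
  "L_orig p q ps \<beta> lam = opt_cost Suc p q ps \<beta> lam"

definition L_trunc :: "nat \<Rightarrow> real \<Rightarrow> real \<Rightarrow> real \<Rightarrow> real \<Rightarrow> real \<Rightarrow> ereal" where
  "L_trunc N p q ps \<beta> lam = opt_cost (\<lambda>d. min (Suc d) N) p q ps \<beta> lam"

end

theory Submission
  imports Defs
begin

text \<open>The \<open>k\<close>-stage optimal values of the original and of every truncated problem obey span
  bounds that are uniform in \<open>k\<close> and in the truncation level: an unsynchronised state is worth
  at most a constant plus a multiple of its cost more than the synchronised state with the same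
  source bit, and the two synchronised states differ by a constant.  Hence the policy that restarts
  the \<open>T\<close>-stage optimal policy every \<open>T\<close> stages has average cost at most
  \<open>(val T + C) / T\<close>, while no policy does better than \<open>val T / T\<close> asymptotically.
  The span bounds also force optimal actions to transmit once the cost of being out of sync is
  large, so along these policies an exponential Lyapunov function of the age has bounded
  expectation and the cost lost by capping the age at \<open>N\<close> decays geometrically in \<open>N\<close>.
  Comparing the two problems through these policies, and through \<open>val\<^sub>N \<le> val\<close>, yields
  \<open>L\<^sup>*(N) \<le> L\<^sup>* \<le> L\<^sup>*(N) + \<epsilon>\<^sub>N\<close> for all large \<open>N\<close>, with \<open>\<epsilon>\<^sub>N \<rightarrow> 0\<close>.\<close>

lemma unit_mult_le:
  fixes c z K :: "'a :: linordered_idom"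
  shows "0 \<le> c \<Longrightarrow> c \<le> 1 \<Longrightarrow> z \<le> K \<Longrightarrow> 0 \<le> K \<Longrightarrow> c * z \<le> K"
  by (cases "z \<le> 0") (auto intro: order_trans[OF mult_left_le_one_le] mult_nonneg_nonpos order_trans)

lemma real_le_power_div:
  fixes b :: real
  assumes "1 < b"
  shows "real m \<le> b ^ m / (b - 1)"
proof -
  have "1 + real m * (b - 1) \<le> (1 + (b - 1)) ^ m"
    by (rule Bernoulli_inequality) (use assms in simp)
  then show ?thesis using assms by (simp add: field_simps)
qed

lemma limsup_le_of_bound:
  assumes "\<And>M. 1 \<le> M \<Longrightarrow> x M \<le> a + b / real M"
  shows "limsup (\<lambda>M. ereal (x M)) \<le> ereal a"
proof -
  have "limsup (\<lambda>M. ereal (x M)) \<le> limsup (\<lambda>M. ereal (a + b / real M))"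
    by (intro Limsup_mono eventually_sequentiallyI[of 1]) (use assms in auto)
  also have "\<dots> = ereal a"
    using tendsto_add[OF tendsto_const[of a] lim_const_over_n[of b]]
    by (intro lim_imp_Limsup) (simp_all add: tendsto_ereal)
  finally show ?thesis .
qed

lemma limsup_ge_of_bound:
  assumes "\<And>M. 1 \<le> M \<Longrightarrow> a - b / real M \<le> x M"
  shows "ereal a \<le> limsup (\<lambda>M. ereal (x M))"
proof -
  have "ereal a = limsup (\<lambda>M. ereal (a - b / real M))"
    using tendsto_diff[OF tendsto_const[of a] lim_const_over_n[of b]]
    by (intro lim_imp_Limsup[symmetric]) (simp_all add: tendsto_ereal)
  also have "\<dots> \<le> limsup (\<lambda>M. ereal (x M))"
    by (intro Limsup_mono eventually_sequentiallyI[of 1]) (use assms in auto)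
  finally show ?thesis .
qed

lemma finite_set_pmf_bool: "finite (set_pmf (M :: bool pmf))"
  by (rule finite_subset[of _ UNIV]) auto

lemma expectation_bind_pmf_finite:
  fixes f :: "'b \<Rightarrow> real"
  assumes "finite (set_pmf M)" "\<And>x. x \<in> set_pmf M \<Longrightarrow> finite (set_pmf (N x))"
  shows "measure_pmf.expectation (bind_pmf M N) f =
         measure_pmf.expectation M (\<lambda>x. measure_pmf.expectation (N x) f)"
proof -
  have "measure_pmf.expectation (bind_pmf M N) f =
        (\<Sum>a\<in>set_pmf M. pmf M a *\<^sub>R measure_pmf.expectation (N a) f)"
    by (rule pmf_expectation_bind) (use assms in auto)
  also have "\<dots> = measure_pmf.expectation M (\<lambda>x. measure_pmf.expectation (N x) f)"
    by (subst integral_measure_pmf[of "set_pmf M"]) (use assms in auto)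
  finally show ?thesis .
qed

lemma expectation_add_pmf_finite:
  fixes f g :: "'a \<Rightarrow> real"
  assumes "finite (set_pmf M)"
  shows "measure_pmf.expectation M (\<lambda>x. f x + g x) =
         measure_pmf.expectation M f + measure_pmf.expectation M g"
  by (rule Bochner_Integration.integral_add) (auto intro: integrable_measure_pmf_finite assms)

lemma expectation_mono_pmf_finite:
  fixes f g :: "'a \<Rightarrow> real"
  assumes "finite (set_pmf M)" "\<And>x. x \<in> set_pmf M \<Longrightarrow> f x \<le> g x"
  shows "measure_pmf.expectation M f \<le> measure_pmf.expectation M g"
  using assms
  by (intro integral_mono_AE) (auto intro: integrable_measure_pmf_finite simp: AE_measure_pmf_iff)

lemma bernoulli_pmf_indicator: "bernoulli_pmf (if b then 1 else 0) = return_pmf b"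
  by (rule pmf_eqI) (auto simp: pmf_return split: split_indicator)

lemma finite_set_trans: "finite (set_pmf (trans u p q ps s a))"
  unfolding trans_def
  by (auto simp: set_bind_pmf Let_def split: prod.splits intro!: finite_UN_I finite_set_pmf_bool)

lemma synced_trans_age_zero:
  "(x', xh', d') \<in> set_pmf (trans u p q ps s a) \<Longrightarrow> x' = xh' \<Longrightarrow> d' = 0"
  unfolding trans_def by (auto simp: set_bind_pmf Let_def split: prod.splits if_splits)

lemma length_hist_pmf: "(h, s) \<in> set_pmf (hist_pmf u p q ps \<pi> t) \<Longrightarrow> length h = t"
  by (induction t arbitrary: h s) (auto simp: set_bind_pmf)

lemma finite_set_hist_pmf: "finite (set_pmf (hist_pmf u p q ps \<pi> t))"
  by (induction t)
    (auto simp: set_bind_pmf intro!: finite_UN_I finite_set_pmf_bool finite_set_trans split: prod.splits)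

definition markov_policy :: "(nat \<Rightarrow> st \<Rightarrow> bool) \<Rightarrow> policy" where
  "markov_policy g h s = (if g (length h) s then 1 else 0)"

lemma markov_policy_admissible: "markov_policy g \<in> admissible"
  by (auto simp: admissible_def markov_policy_def)

primrec state_pmf :: "(nat \<Rightarrow> nat) \<Rightarrow> real \<Rightarrow> real \<Rightarrow> real \<Rightarrow> (nat \<Rightarrow> st \<Rightarrow> bool) \<Rightarrow> nat \<Rightarrow> st pmf"
  where
  "state_pmf u p q ps g 0 = return_pmf s_init"
| "state_pmf u p q ps g (Suc t) = bind_pmf (state_pmf u p q ps g t) (\<lambda>s. trans u p q ps s (g t s))"

lemma finite_set_state_pmf: "finite (set_pmf (state_pmf u p q ps g t))"
  by (induction t) (auto simp: set_bind_pmf intro!: finite_UN_I finite_set_trans)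

lemma synced_state_pmf_age_zero:
  "(x, xh, d) \<in> set_pmf (state_pmf u p q ps g t) \<Longrightarrow> x = xh \<Longrightarrow> d = 0"
  by (cases t) (auto simp: s_init_def set_bind_pmf dest: synced_trans_age_zero)

lemma map_snd_hist_pmf_markov_policy:
  "map_pmf snd (hist_pmf u p q ps (markov_policy g) t) = state_pmf u p q ps g t"
proof (induction t)
  case (Suc t)
  have "map_pmf snd (hist_pmf u p q ps (markov_policy g) (Suc t)) =
        bind_pmf (hist_pmf u p q ps (markov_policy g) t) (\<lambda>(h, s). trans u p q ps s (g t s))"
    unfolding hist_pmf.simps map_bind_pmf
  proof (intro bind_pmf_cong refl)
    fix z assume z: "z \<in> set_pmf (hist_pmf u p q ps (markov_policy g) t)"
    obtain h s where [simp]: "z = (h, s)" by (cases z)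
    have "length h = t" using z length_hist_pmf by simp
    then show "map_pmf snd (case z of (h, s) \<Rightarrow> bernoulli_pmf (markov_policy g h s) \<bind>
                 (\<lambda>a. map_pmf (\<lambda>s'. (h @ [(s, a)], s')) (trans u p q ps s a))) =
               (case z of (h, s) \<Rightarrow> trans u p q ps s (g t s))"
      by (simp add: markov_policy_def bernoulli_pmf_indicator bind_return_pmf map_pmf_comp)
  qed
  also have "\<dots> = bind_pmf (map_pmf snd (hist_pmf u p q ps (markov_policy g) t))
                    (\<lambda>s. trans u p q ps s (g t s))"
    by (simp add: bind_map_pmf case_prod_unfold)
  finally show ?case using Suc by simp
qed simp

lemma exp_stage_markov_policy:
  "exp_stage u p q ps \<beta> lam (markov_policy g) t =
   measure_pmf.expectation (state_pmf u p q ps g t) (\<lambda>s. stage_cost u p q ps \<beta> lam s (g t s))"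
proof -
  have "sa_pmf u p q ps (markov_policy g) t =
        bind_pmf (hist_pmf u p q ps (markov_policy g) t) (\<lambda>z. return_pmf (snd z, g t (snd z)))"
    unfolding sa_pmf_def
    by (intro bind_pmf_cong) (auto simp: markov_policy_def bernoulli_pmf_indicator dest: length_hist_pmf)
  also have "\<dots> = map_pmf (\<lambda>s. (s, g t s)) (state_pmf u p q ps g t)"
    by (simp add: map_pmf_comp map_pmf_def[symmetric] map_snd_hist_pmf_markov_policy[symmetric])
  finally show ?thesis by (simp add: exp_stage_def)
qed

abbreviation trunc_age :: "nat \<Rightarrow> nat \<Rightarrow> nat" where
  "trunc_age N \<equiv> \<lambda>d. min (Suc d) N"

definition trunc_state :: "nat \<Rightarrow> st \<Rightarrow> st" where
  "trunc_state N s = (case s of (x, xh, d) \<Rightarrow> (x, xh, min d N))"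

lemma trunc_state_init [simp]: "trunc_state N s_init = s_init"
  by (simp add: trunc_state_def s_init_def)

lemma map_trunc_state_trans:
  "map_pmf (trunc_state N) (trans Suc p q ps s a) = trans (trunc_age N) p q ps (trunc_state N s) a"
proof -
  obtain x xh d where s: "s = (x, xh, d)" by (cases s)
  show ?thesis unfolding s trans_def trunc_state_def
    by (simp add: map_bind_pmf Let_def) (intro bind_pmf_cong refl; auto)
qed

lemma map_trunc_state_state_pmf:
  "map_pmf (trunc_state N) (state_pmf Suc p q ps (\<lambda>t s. g t (trunc_state N s)) t) =
   state_pmf (trunc_age N) p q ps g t"
proof (induction t)
  case (Suc t)
  have "map_pmf (trunc_state N) (state_pmf Suc p q ps (\<lambda>t s. g t (trunc_state N s)) (Suc t)) =
        bind_pmf (map_pmf (trunc_state N) (state_pmf Suc p q ps (\<lambda>t s. g t (trunc_state N s)) t))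
          (\<lambda>s. trans (trunc_age N) p q ps s (g t s))"
    by (simp add: map_bind_pmf map_trunc_state_trans bind_map_pmf)
  then show ?case using Suc by simp
qed simp

locale aoii_model =
  fixes p q ps \<beta> lam :: real
  assumes p_pos: "0 < p" and p_lt_1: "p < 1" and q_pos: "0 < q" and q_lt_1: "q < 1"
    and ps_pos: "0 < ps" and ps_le_1: "ps \<le> 1"
    and beta_nonneg: "0 \<le> \<beta>" and beta_le_1: "\<beta> \<le> 1" and lam_nonneg: "0 \<le> lam"
begin

abbreviation pf :: real where "pf \<equiv> 1 - ps"

definition flip :: "bool \<Rightarrow> real" where "flip x = (if x then q else p)"

definition weight :: "bool \<Rightarrow> real" where "weight x = (if x then \<beta> else 1 - \<beta>)"

lemma flip_pos: "0 < flip x" and flip_lt_1: "flip x < 1"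
  and weight_nonneg: "0 \<le> weight x" and weight_le_1: "weight x \<le> 1"
  using p_pos p_lt_1 q_pos q_lt_1 beta_nonneg beta_le_1 by (auto simp: flip_def weight_def)

lemma expectation_trans_synced:
  "measure_pmf.expectation (trans u p q ps (y, y, 0) a) f =
     (1 - flip y) * f (y, y, 0)
   + flip y * (if a then ps * f (\<not>y, \<not>y, 0) + pf * f (\<not>y, y, u 0) else f (\<not>y, y, u 0))"
  using p_pos p_lt_1 q_pos q_lt_1 ps_pos ps_le_1
  by (cases y; cases a)
    (simp_all add: trans_def src_next_def flip_def Let_def expectation_bind_pmf_finite
      finite_set_pmf_bool set_bind_pmf algebra_simps)

lemma expectation_trans_unsynced:
  "measure_pmf.expectation (trans u p q ps (y, \<not>y, d) a) f =
     flip y * f (\<not>y, \<not>y, 0)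
   + (1 - flip y) * (if a then ps * f (y, y, 0) + pf * f (y, \<not>y, u d) else f (y, \<not>y, u d))"
  using p_pos p_lt_1 q_pos q_lt_1 ps_pos ps_le_1
  by (cases y; cases a)
    (simp_all add: trans_def src_next_def flip_def Let_def expectation_bind_pmf_finite
      finite_set_pmf_bool set_bind_pmf algebra_simps)

lemma cost_synced [simp]: "cost \<beta> (x, x, d) = 0"
  by (cases x) (auto simp: cost_def)

lemma cost_unsynced [simp]: "cost \<beta> (x, \<not> x, d) = weight x * d"
  by (cases x) (auto simp: cost_def weight_def)

lemma cost_nonneg: "0 \<le> cost \<beta> s"
  using beta_nonneg beta_le_1 by (auto simp: cost_def split: prod.splits)

primrec val :: "(nat \<Rightarrow> nat) \<Rightarrow> nat \<Rightarrow> st \<Rightarrow> real" where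
  "val u 0 s = 0"
| "val u (Suc k) s = min
     (stage_cost u p q ps \<beta> lam s False + measure_pmf.expectation (trans u p q ps s False) (val u k))
     (stage_cost u p q ps \<beta> lam s True + measure_pmf.expectation (trans u p q ps s True) (val u k))"

definition qval :: "(nat \<Rightarrow> nat) \<Rightarrow> nat \<Rightarrow> st \<Rightarrow> bool \<Rightarrow> real" where
  "qval u k s a = stage_cost u p q ps \<beta> lam s a + measure_pmf.expectation (trans u p q ps s a) (val u k)"

lemma val_Suc: "val u (Suc k) s = min (qval u k s False) (qval u k s True)"
  by (simp add: qval_def)

declare val.simps(2) [simp del]

lemma qval_eq: "qval u k s a =
   measure_pmf.expectation (trans u p q ps s a) (\<lambda>s'. cost \<beta> s' + val u k s') + (if a then lam else 0)"
  unfolding qval_def stage_cost_def by (simp add: expectation_add_pmf_finite finite_set_trans)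

lemma qval_synced: "qval u k (x, x, 0) a = (if a then lam else 0)
   + (1 - flip x) * val u k (x, x, 0)
   + flip x * (if a then ps * val u k (\<not>x, \<not>x, 0) + pf * (weight (\<not>x) * u 0 + val u k (\<not>x, x, u 0))
               else weight (\<not>x) * u 0 + val u k (\<not>x, x, u 0))"
  unfolding qval_eq expectation_trans_synced by (cases x) (auto simp: cost_def weight_def algebra_simps)

lemma qval_unsynced: "qval u k (x, \<not>x, d) a = (if a then lam else 0)
   + flip x * val u k (\<not>x, \<not>x, 0)
   + (1 - flip x) * (if a then ps * val u k (x, x, 0) + pf * (weight x * u d + val u k (x, \<not>x, u d))
                     else weight x * u d + val u k (x, \<not>x, u d))"
  unfolding qval_eq expectation_trans_unsynced by (auto simp: algebra_simps)

lemma val_nonneg: "0 \<le> val u k s"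
proof (induction k arbitrary: s)
  case (Suc k)
  have "0 \<le> qval u k s a" for a
    unfolding qval_eq using Suc lam_nonneg cost_nonneg
    by (intro add_nonneg_nonneg Bochner_Integration.integral_nonneg) auto
  then show ?case by (simp add: val_Suc)
qed simp

section \<open>Uniform span bounds for the values\<close>

text \<open>The constants are chosen so that the linear inequalities \<open>span_slope_key\<close>,
  \<open>span_sync_key\<close>, \<open>span_unsync_key\<close> and \<open>span_swap_key\<close> hold; these are exactly what
  the induction step in \<open>span_bounds\<close> needs.\<close>

definition span_slope :: real where "span_slope = 1 / ps"

definition span_sync :: real where
  "span_sync = (lam + 1) / (min p q * ps) + pf * ((lam + span_slope) / ps + span_slope) / ps"

definition span_unsync :: real where "span_unsync = (lam + span_slope) / ps + span_sync"

definition span_swap :: real where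
  "span_swap = (lam + 1 + pf * (span_unsync + span_slope) + span_sync) / (1 - \<bar>1 - p - q\<bar>)"

lemma span_slope_pos: "0 < span_slope"
  using ps_pos by (simp add: span_slope_def)

lemma span_sync_nonneg: "0 \<le> span_sync"
  using p_pos q_pos ps_pos ps_le_1 span_slope_pos lam_nonneg by (simp add: span_sync_def)

lemma span_unsync_nonneg: "0 \<le> span_unsync"
  using span_sync_nonneg span_slope_pos lam_nonneg ps_pos by (simp add: span_unsync_def)

lemma span_swap_nonneg: "0 \<le> span_swap"
  using p_pos p_lt_1 q_pos q_lt_1 span_sync_nonneg span_unsync_nonneg span_slope_pos ps_le_1 lam_nonneg
  by (simp add: span_swap_def)

lemma span_slope_key: "pf * (1 + span_slope) \<le> span_slope"
proof -
  have "pf * (1 + span_slope) = (1 - ps * ps) / ps"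
    using ps_pos by (simp add: span_slope_def field_simps)
  also have "\<dots> \<le> 1 / ps" using ps_pos by (intro divide_right_mono) auto
  finally show ?thesis by (simp add: span_slope_def)
qed

lemma span_sync_key: "lam + flip x * pf * (1 + span_unsync + span_slope) \<le> flip x * span_sync"
proof -
  define m where "m = min p q"
  have m: "0 < m" "m \<le> flip x" using p_pos q_pos by (auto simp: m_def flip_def)
  have "span_sync - pf * (1 + span_unsync + span_slope) = (lam + 1) / m - pf"
    using ps_pos m unfolding span_sync_def span_unsync_def m_def[symmetric]
    by (simp add: field_simps)
  moreover have "lam / m \<le> (lam + 1) / m - pf"
    using m flip_lt_1[of x] ps_pos by (simp add: field_simps add_increasing2)
  ultimately have "lam / m \<le> span_sync - pf * (1 + span_unsync + span_slope)" by simp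
  moreover have "lam \<le> flip x * (lam / m)"
    using m lam_nonneg by (simp add: field_simps mult_left_mono)
  ultimately have "lam \<le> flip x * (span_sync - pf * (1 + span_unsync + span_slope))"
    using flip_pos[of x] by (smt (verit) mult_left_mono)
  then show ?thesis by (simp add: algebra_simps)
qed

lemma span_unsync_key:
  "lam + flip x * span_sync + (1 - flip x) * pf * span_unsync + span_slope \<le> span_unsync"
proof -
  have "span_unsync * (ps + flip x * pf) - (lam + span_slope) - flip x * span_sync =
        (lam + span_slope) * flip x * pf / ps + span_sync * ps * (1 - flip x)"
    unfolding span_unsync_def using ps_pos by (simp add: field_simps)
  moreover have "0 \<le> (lam + span_slope) * flip x * pf / ps + span_sync * ps * (1 - flip x)"
    using lam_nonneg span_slope_pos span_sync_nonneg flip_pos[of x] flip_lt_1[of x] ps_pos ps_le_1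
    by (intro add_nonneg_nonneg) auto
  ultimately show ?thesis by (simp add: algebra_simps)
qed

lemma span_swap_key:
  "lam + pf * (1 + span_unsync + span_slope) + span_sync + \<bar>1 - p - q\<bar> * span_swap \<le> span_swap"
proof -
  have "span_swap * (1 - \<bar>1 - p - q\<bar>) = lam + 1 + pf * (span_unsync + span_slope) + span_sync"
    using p_pos p_lt_1 q_pos q_lt_1 by (simp add: span_swap_def)
  moreover have "pf * (1 + span_unsync + span_slope) \<le> 1 + pf * (span_unsync + span_slope)"
    using ps_pos ps_le_1 by (simp add: algebra_simps)
  ultimately show ?thesis by (simp add: algebra_simps)
qed

definition span_bounds :: "(nat \<Rightarrow> nat) \<Rightarrow> nat \<Rightarrow> bool" where
  "span_bounds u k \<longleftrightarrow>
     (\<forall>y d. val u k (y, y, 0) \<le> val u k (y, \<not>y, d) + span_sync) \<and>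
     (\<forall>y d. val u k (y, \<not>y, d) \<le> val u k (y, y, 0) + span_unsync + span_slope * weight y * d) \<and>
     (\<forall>y. val u k (y, y, 0) \<le> val u k (\<not>y, \<not>y, 0) + span_swap)"

lemma
  assumes "span_bounds u k"
  shows span_bounds_sync: "val u k (y, y, 0) \<le> val u k (y, \<not>y, d) + span_sync"
    and span_bounds_unsync:
      "val u k (y, \<not>y, d) \<le> val u k (y, y, 0) + span_unsync + span_slope * weight y * d"
    and span_bounds_swap: "val u k (y, y, 0) \<le> val u k (\<not>y, \<not>y, 0) + span_swap"
  using assms by (simp_all add: span_bounds_def)

text \<open>The extra cost of a fresh desynchronisation, paid whenever the source bit flips.\<close>

lemma fresh_desync_le:
  assumes span: "span_bounds u k" and age: "\<And>d. u d \<le> Suc d"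
  shows "weight y * u 0 + val u k (y, \<not>y, u 0) - val u k (y, y, 0) \<le> 1 + span_unsync + span_slope"
proof -
  have "weight y * u 0 \<le> 1"
    using weight_le_1[of y] weight_nonneg[of y] age[of 0] by (simp add: mult_le_one)
  moreover from this have "span_slope * weight y * u 0 \<le> span_slope"
    using span_slope_pos by (simp add: mult.assoc mult_left_le)
  ultimately show ?thesis using span_bounds_unsync[OF span, of y "u 0"] by linarith
qed

lemma span_bounds_Suc_sync:
  assumes span: "span_bounds u k" and age: "\<And>d. u d \<le> Suc d"
  shows "val u (Suc k) (x, x, 0) \<le> val u (Suc k) (x, \<not>x, d) + span_sync"
proof -
  define A where "A = val u k (x, x, 0)"
  define A' where "A' = val u k (\<not>x, \<not>x, 0)"
  define Bo where "Bo = val u k (\<not>x, x, u 0)"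
  define Bd where "Bd = val u k (x, \<not>x, u d)"
  define R where "R = flip x"
  have R: "0 < R" "R < 1" using flip_pos flip_lt_1 by (auto simp: R_def)
  have "weight (\<not>x) * u 0 + Bo - A' \<le> 1 + span_unsync + span_slope"
    using fresh_desync_le[OF span age, of "\<not>x"] by (simp add: Bo_def A'_def)
  then have t1: "R * pf * (weight (\<not>x) * u 0 + Bo - A') \<le> R * pf * (1 + span_unsync + span_slope)"
    using R ps_pos ps_le_1 by (intro mult_left_mono) auto
  have IHd: "A \<le> Bd + span_sync" using span_bounds_sync[OF span] by (simp add: A_def Bd_def)
  have key: "lam + R * pf * (1 + span_unsync + span_slope) \<le> R * span_sync"
    using span_sync_key[of x] by (simp add: R_def)
  have "qval u k (x, x, 0) True \<le> qval u k (x, \<not>x, d) a + span_sync" for a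
  proof (cases a)
    case True
    have "(1 - R) * (pf * (A - Bd)) \<le> (1 - R) * span_sync"
      using R ps_pos ps_le_1 IHd span_sync_nonneg by (intro mult_left_mono unit_mult_le) auto
    moreover have "0 \<le> (1 - R) * pf * (weight x * u d)" using R ps_le_1 weight_nonneg by simp
    ultimately show ?thesis using t1 key True lam_nonneg
      unfolding qval_synced qval_unsynced by (simp add: A_def A'_def Bo_def Bd_def R_def algebra_simps)
  next
    case False
    have "(1 - R) * (A - Bd) \<le> (1 - R) * span_sync" using R IHd by (intro mult_left_mono) auto
    moreover have "0 \<le> (1 - R) * (weight x * u d)" using R weight_nonneg by simp
    ultimately show ?thesis using t1 key False lam_nonneg
      unfolding qval_synced qval_unsynced by (simp add: A_def A'_def Bo_def Bd_def R_def algebra_simps)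
  qed
  from this[of False] this[of True] show ?thesis by (auto simp: val_Suc min_def)
qed

lemma span_bounds_Suc_unsync:
  assumes span: "span_bounds u k" and age: "\<And>d. u d \<le> Suc d"
  shows "val u (Suc k) (x, \<not>x, d) \<le> val u (Suc k) (x, x, 0) + span_unsync + span_slope * weight x * d"
proof -
  define A where "A = val u k (x, x, 0)"
  define A' where "A' = val u k (\<not>x, \<not>x, 0)"
  define Bo where "Bo = val u k (\<not>x, x, u 0)"
  define Bd where "Bd = val u k (x, \<not>x, u d)"
  define R where "R = flip x"
  have R: "0 < R" "R < 1" using flip_pos flip_lt_1 by (auto simp: R_def)
  have IHo: "A' \<le> Bo + span_sync"
    using span_bounds_sync[OF span, of "\<not>x" "u 0"] by (simp add: Bo_def A'_def)
  have IHd: "Bd - A \<le> span_unsync + span_slope * weight x * u d"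
    using span_bounds_unsync[OF span, of x "u d"] by (simp add: A_def Bd_def)
  have slope: "(1 - R) * pf * (1 + span_slope) \<le> span_slope"
    using span_slope_key R ps_pos ps_le_1 span_slope_pos
    by (smt (verit) mult_left_le_one_le mult_nonneg_nonneg mult.commute mult.assoc)
  have wud: "weight x * u d \<le> weight x * d + 1"
  proof -
    have "weight x * u d \<le> weight x * (d + 1)"
      using age[of d] weight_nonneg[of x] by (intro mult_left_mono) auto
    then show ?thesis using weight_le_1[of x] by (simp add: algebra_simps)
  qed
  have "(1 - R) * pf * (weight x * u d + Bd - A)
        \<le> (1 - R) * pf * (weight x * u d + span_unsync + span_slope * weight x * u d)"
    using IHd R ps_pos ps_le_1 by (intro mult_left_mono) auto
  also have "\<dots> = (1 - R) * pf * span_unsync + ((1 - R) * pf * (1 + span_slope)) * (weight x * u d)"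
    by (simp add: algebra_simps)
  also have "\<dots> \<le> (1 - R) * pf * span_unsync + span_slope * (weight x * d + 1)"
    using slope wud R ps_pos ps_le_1 weight_nonneg[of x] span_slope_pos
    by (intro add_left_mono mult_mono) auto
  finally have t2: "(1 - R) * pf * (weight x * u d + Bd - A)
                    \<le> (1 - R) * pf * span_unsync + span_slope * weight x * d + span_slope"
    by (simp add: algebra_simps)
  have key: "lam + R * span_sync + (1 - R) * pf * span_unsync + span_slope \<le> span_unsync"
    using span_unsync_key[of x] by (simp add: R_def)
  have "qval u k (x, \<not>x, d) True \<le> qval u k (x, x, 0) a + span_unsync + span_slope * weight x * d" for a
  proof (cases a)
    case True
    have "R * (pf * (A' - Bo)) \<le> R * span_sync"
      using R ps_pos ps_le_1 IHo span_sync_nonneg by (intro mult_left_mono unit_mult_le) auto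
    moreover have "0 \<le> R * pf * (weight (\<not>x) * u 0)" using R ps_le_1 weight_nonneg by simp
    ultimately show ?thesis using t2 key True lam_nonneg
      unfolding qval_synced qval_unsynced by (simp add: A_def A'_def Bo_def Bd_def R_def algebra_simps)
  next
    case False
    have "R * (A' - Bo) \<le> R * span_sync" using R IHo by (intro mult_left_mono) auto
    moreover have "0 \<le> R * (weight (\<not>x) * u 0)" using R weight_nonneg by simp
    ultimately show ?thesis using t2 key False lam_nonneg
      unfolding qval_synced qval_unsynced by (simp add: A_def A'_def Bo_def Bd_def R_def algebra_simps)
  qed
  from this[of False] this[of True] show ?thesis by (auto simp: val_Suc min_def)
qed

lemma span_bounds_Suc_swap:
  assumes span: "span_bounds u k" and age: "\<And>d. u d \<le> Suc d"
  shows "val u (Suc k) (x, x, 0) \<le> val u (Suc k) (\<not>x, \<not>x, 0) + span_swap"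
proof -
  define A where "A = val u k (x, x, 0)"
  define A' where "A' = val u k (\<not>x, \<not>x, 0)"
  define Bo where "Bo = val u k (\<not>x, x, u 0)"
  define Bo' where "Bo' = val u k (x, \<not>x, u 0)"
  define R where "R = flip x"
  define R' where "R' = flip (\<not>x)"
  have R: "0 < R" "R < 1" "0 < R'" "R' < 1" using flip_pos flip_lt_1 by (auto simp: R_def R'_def)
  have "weight (\<not>x) * u 0 + Bo - A' \<le> 1 + span_unsync + span_slope"
    using fresh_desync_le[OF span age, of "\<not>x"] by (simp add: Bo_def A'_def)
  then have "R * pf * (weight (\<not>x) * u 0 + Bo - A') \<le> R * pf * (1 + span_unsync + span_slope)"
    using R ps_pos ps_le_1 by (intro mult_left_mono) auto
  also have "\<dots> \<le> pf * (1 + span_unsync + span_slope)"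
    using R ps_pos ps_le_1 span_unsync_nonneg span_slope_pos by (simp add: mult_left_le_one_le mult.assoc)
  finally have t1: "R * pf * (weight (\<not>x) * u 0 + Bo - A') \<le> pf * (1 + span_unsync + span_slope)" .
  have IHo: "A \<le> Bo' + span_sync" using span_bounds_sync[OF span, of x "u 0"] by (simp add: A_def Bo'_def)
  text \<open>The two synchronised states are coupled through the second eigenvalue \<open>1 - p - q\<close>
    of the source chain.\<close>
  have t3: "(1 - R - R') * (A - A') \<le> \<bar>1 - p - q\<bar> * span_swap"
  proof -
    have RR: "R + R' = p + q" by (cases x) (auto simp: R_def R'_def flip_def)
    have "\<bar>A - A'\<bar> \<le> span_swap"
      using span_bounds_swap[OF span, of x] span_bounds_swap[OF span, of "\<not>x"]
      by (auto simp: A_def A'_def)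
    have "(1 - p - q) * (A - A') \<le> \<bar>1 - p - q\<bar> * \<bar>A - A'\<bar>"
      by (simp flip: abs_mult)
    also have "\<dots> \<le> \<bar>1 - p - q\<bar> * span_swap"
      using \<open>\<bar>A - A'\<bar> \<le> span_swap\<close> by (intro mult_left_mono) auto
    finally have "(1 - p - q) * (A - A') \<le> \<bar>1 - p - q\<bar> * span_swap" .
    moreover have "1 - R - R' = 1 - p - q" using RR by simp
    ultimately show ?thesis by (simp only:)
  qed
  have "qval u k (x, x, 0) True \<le> qval u k (\<not>x, \<not>x, 0) a + span_swap" for a
  proof (cases a)
    case True
    have "R' * (pf * (A - Bo')) \<le> span_sync"
      using R ps_pos ps_le_1 IHo span_sync_nonneg by (intro unit_mult_le) auto
    moreover have "0 \<le> R' * pf * (weight x * u 0)" using R ps_le_1 weight_nonneg by simp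
    ultimately show ?thesis using t1 t3 span_swap_key True lam_nonneg
      unfolding qval_synced by (simp add: A_def A'_def Bo_def Bo'_def R_def R'_def algebra_simps)
  next
    case False
    have "R' * (A - Bo') \<le> span_sync" using R IHo span_sync_nonneg by (intro unit_mult_le) auto
    moreover have "0 \<le> R' * (weight x * u 0)" using R weight_nonneg by simp
    ultimately show ?thesis using t1 t3 span_swap_key False lam_nonneg
      unfolding qval_synced by (simp add: A_def A'_def Bo_def Bo'_def R_def R'_def algebra_simps)
  qed
  from this[of False] this[of True] show ?thesis by (auto simp: val_Suc min_def)
qed

lemma span_bounds:
  assumes "\<And>d. u d \<le> Suc d"
  shows "span_bounds u k"
proof (induction k)
  case 0
  then show ?case
    using span_sync_nonneg span_unsync_nonneg span_slope_pos weight_nonneg span_swap_nonneg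
    by (simp add: span_bounds_def)
next
  case (Suc k)
  then show ?case
    using span_bounds_Suc_sync span_bounds_Suc_unsync span_bounds_Suc_swap assms
    by (simp add: span_bounds_def)
qed

primrec policy_cost :: "(nat \<Rightarrow> nat) \<Rightarrow> policy \<Rightarrow> nat \<Rightarrow> (st \<times> bool) list \<Rightarrow> st \<Rightarrow> real" where
  "policy_cost u \<pi> 0 h s = 0"
| "policy_cost u \<pi> (Suc k) h s = measure_pmf.expectation (bernoulli_pmf (\<pi> h s))
     (\<lambda>a. stage_cost u p q ps \<beta> lam s a +
          measure_pmf.expectation (trans u p q ps s a) (policy_cost u \<pi> k (h @ [(s, a)])))"

lemma val_le_policy_cost:
  assumes "\<pi> \<in> admissible"
  shows "val u k s \<le> policy_cost u \<pi> k h s"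
proof (induction k arbitrary: h s)
  case (Suc k)
  have \<pi>: "0 \<le> \<pi> h s" "\<pi> h s \<le> 1"
    using assms unfolding admissible_def mem_Collect_eq by blast+
  define f where "f a = stage_cost u p q ps \<beta> lam s a +
     measure_pmf.expectation (trans u p q ps s a) (policy_cost u \<pi> k (h @ [(s, a)]))" for a
  have "qval u k s a \<le> f a" for a
    unfolding qval_def f_def using Suc
    by (intro add_left_mono expectation_mono_pmf_finite finite_set_trans) auto
  then have "val u (Suc k) s \<le> f True" "val u (Suc k) s \<le> f False"
    by (auto simp: val_Suc min_le_iff_disj)
  then have "\<pi> h s * val u (Suc k) s \<le> \<pi> h s * f True"
    "(1 - \<pi> h s) * val u (Suc k) s \<le> (1 - \<pi> h s) * f False"
    using \<pi> by (auto intro: mult_left_mono)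
  then have "val u (Suc k) s \<le> \<pi> h s * f True + (1 - \<pi> h s) * f False"
    by (simp add: algebra_simps)
  then show ?case using \<pi> by (simp add: f_def[abs_def] algebra_simps)
qed simp

lemma expectation_policy_cost:
  "measure_pmf.expectation (hist_pmf u p q ps \<pi> t) (\<lambda>(h, s). policy_cost u \<pi> k h s) =
   (\<Sum>i<k. exp_stage u p q ps \<beta> lam \<pi> (t + i))"
proof (induction k arbitrary: t)
  case (Suc k)
  let ?H = "hist_pmf u p q ps \<pi> t"
  define F where "F = (\<lambda>(h, s). measure_pmf.expectation (bernoulli_pmf (\<pi> h s))
                                 (stage_cost u p q ps \<beta> lam s))"
  define G where "G = (\<lambda>(h, s). measure_pmf.expectation (bernoulli_pmf (\<pi> h s))
       (\<lambda>a. measure_pmf.expectation (trans u p q ps s a) (policy_cost u \<pi> k (h @ [(s, a)]))))"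
  have "measure_pmf.expectation ?H (\<lambda>(h, s). policy_cost u \<pi> (Suc k) h s) =
        measure_pmf.expectation ?H (\<lambda>z. F z + G z)"
    by (intro Bochner_Integration.integral_cong refl)
      (auto simp: F_def G_def expectation_add_pmf_finite finite_set_pmf_bool split: prod.splits)
  also have "\<dots> = measure_pmf.expectation ?H F + measure_pmf.expectation ?H G"
    by (rule expectation_add_pmf_finite[OF finite_set_hist_pmf])
  also have "measure_pmf.expectation ?H F = exp_stage u p q ps \<beta> lam \<pi> t"
    unfolding exp_stage_def sa_pmf_def
    by (subst expectation_bind_pmf_finite[OF finite_set_hist_pmf])
      (auto simp: F_def case_prod_unfold finite_set_pmf_bool)
  also have "measure_pmf.expectation ?H G =
             measure_pmf.expectation (hist_pmf u p q ps \<pi> (Suc t)) (\<lambda>(h, s). policy_cost u \<pi> k h s)"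
    by (simp add: G_def case_prod_unfold expectation_bind_pmf_finite finite_set_hist_pmf
        finite_set_pmf_bool finite_set_trans set_bind_pmf)
  also have "\<dots> = (\<Sum>i<k. exp_stage u p q ps \<beta> lam \<pi> (Suc t + i))"
    by (rule Suc)
  finally show ?case
    using Suc sum.lessThan_Suc_shift[of "\<lambda>i. exp_stage u p q ps \<beta> lam \<pi> (t + i)" k] by simp
qed (simp add: case_prod_unfold)

lemma exp_stage_nonneg: "0 \<le> exp_stage u p q ps \<beta> lam \<pi> t"
  unfolding exp_stage_def stage_cost_def
  by (intro Bochner_Integration.integral_nonneg)
    (auto intro!: add_nonneg_nonneg Bochner_Integration.integral_nonneg cost_nonneg lam_nonneg)

lemma val_le_sum_exp_stage:
  assumes "\<pi> \<in> admissible"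
  shows "val u T s_init \<le> (\<Sum>t<T. exp_stage u p q ps \<beta> lam \<pi> t)"
  using val_le_policy_cost[OF assms, of u T s_init "[]"] expectation_policy_cost[of u \<pi> 0 T] by simp

section \<open>Optimal actions transmit at large ages\<close>

definition opt_act :: "(nat \<Rightarrow> nat) \<Rightarrow> nat \<Rightarrow> st \<Rightarrow> bool" where
  "opt_act u k s \<longleftrightarrow> qval u k s True \<le> qval u k s False"

lemma val_Suc_opt_act: "val u (Suc k) s = qval u k s (opt_act u k s)"
  by (cases "qval u k s True \<le> qval u k s False") (auto simp: val_Suc opt_act_def min_def)

definition transmit_threshold :: real where
  "transmit_threshold = span_sync + lam / (ps * (1 - max p q))"

lemma opt_act_unsynced:
  assumes age: "\<And>d. u d \<le> Suc d" and large: "transmit_threshold \<le> weight x * u d"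
  shows "opt_act u k (x, \<not>x, d)"
proof -
  define A where "A = val u k (x, x, 0)"
  define Bd where "Bd = val u k (x, \<not>x, u d)"
  define R where "R = flip x"
  define m where "m = max p q"
  have IH: "A \<le> Bd + span_sync"
    using span_bounds_sync[OF span_bounds[OF age]] by (simp add: A_def Bd_def)
  have R: "0 < 1 - R" "1 - m \<le> 1 - R" using flip_lt_1 by (auto simp: R_def m_def flip_def)
  have m: "0 < 1 - m" using p_lt_1 q_lt_1 by (simp add: m_def)
  have "1 \<le> (1 - R) / (1 - m)" using R m by simp
  then have "lam \<le> lam * ((1 - R) / (1 - m))"
    using lam_nonneg by (metis mult_left_mono mult.right_neutral)
  also have "\<dots> = (1 - R) * ps * (lam / (ps * (1 - m)))"
    using ps_pos m by (simp add: field_simps)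
  also have "\<dots> \<le> (1 - R) * ps * (weight x * u d - span_sync)"
    using large R ps_pos by (intro mult_left_mono) (auto simp: transmit_threshold_def m_def)
  also have "\<dots> \<le> (1 - R) * ps * (weight x * u d + Bd - A)"
    using IH R ps_pos by (intro mult_left_mono) auto
  finally have "qval u k (x, \<not>x, d) True \<le> qval u k (x, \<not>x, d) False"
    unfolding qval_unsynced by (simp add: A_def Bd_def R_def algebra_simps)
  then show ?thesis by (simp add: opt_act_def)
qed

section \<open>An exponential Lyapunov function\<close>

text \<open>Any base in \<open>(1, 1 / pf)\<close> would do: it must dominate the linear growth of the cost,
  while a transmission attempt still contracts it in expectation.\<close>

definition lyap_base :: real where "lyap_base = 2 / (1 + pf)"

lemma one_less_lyap_base: "1 < lyap_base"
  using ps_pos ps_le_1 by (simp add: lyap_base_def)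

lemma pf_lyap_base_less_1: "pf * lyap_base < 1"
  using ps_pos ps_le_1 by (simp add: lyap_base_def field_simps)

lemma lyap_base_power_mono: "m \<le> n \<Longrightarrow> lyap_base ^ m \<le> lyap_base ^ n"
  using one_less_lyap_base by (intro power_increasing) auto

definition lyap :: "bool \<Rightarrow> st \<Rightarrow> real" where
  "lyap x s = (case s of (x0, xh, d) \<Rightarrow> if x0 = x \<and> xh \<noteq> x then lyap_base ^ d else 0)"

lemma lyap_synced [simp]: "lyap x (y, y, d) = 0"
  and lyap_unsynced [simp]: "lyap x (x, \<not>x, d) = lyap_base ^ d"
  and lyap_other [simp]: "lyap x (\<not>x, z, d) = 0"
  by (auto simp: lyap_def)

lemma lyap_nonneg: "0 \<le> lyap x s"
  using one_less_lyap_base by (auto simp: lyap_def split: prod.splits)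

lemma lyap_le: "lyap x s \<le> lyap_base ^ snd (snd s)"
  using one_less_lyap_base by (auto simp: lyap_def split: prod.splits)

lemma mult_transmit_le: "0 \<le> c \<Longrightarrow> c \<le> 1 \<Longrightarrow> 0 \<le> X \<Longrightarrow> c * (if a then pf * X else X) \<le> X"
  using ps_pos ps_le_1 by (intro unit_mult_le) (auto intro: mult_left_le_one_le)

lemma expectation_trans_lyap_synced:
  assumes age: "\<And>d. u d \<le> Suc d"
  shows "measure_pmf.expectation (trans u p q ps (y, y, 0) a) (lyap x) \<le> lyap_base"
proof -
  have "measure_pmf.expectation (trans u p q ps (y, y, 0) a) (lyap x) =
        flip y * (if a then pf * lyap x (\<not>y, y, u 0) else lyap x (\<not>y, y, u 0))"
    by (simp add: expectation_trans_synced)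
  also have "\<dots> \<le> lyap x (\<not>y, y, u 0)"
    using flip_pos[of y] flip_lt_1[of y] lyap_nonneg by (intro mult_transmit_le) auto
  also have "\<dots> \<le> lyap_base ^ u 0" using lyap_le[of x "(\<not>y, y, u 0)"] by simp
  also have "\<dots> \<le> lyap_base" using lyap_base_power_mono[of "u 0" 1] age[of 0] by simp
  finally show ?thesis .
qed

lemma expectation_trans_lyap_unsynced:
  assumes age: "\<And>d. u d \<le> Suc d"
  shows "measure_pmf.expectation (trans u p q ps (x, \<not>x, d) a) (lyap x)
         \<le> (if a then pf * lyap_base * lyap_base ^ d else lyap_base ^ Suc d)"
proof -
  have up: "lyap_base ^ u d \<le> lyap_base ^ Suc d" using lyap_base_power_mono[OF age] .
  have "measure_pmf.expectation (trans u p q ps (x, \<not>x, d) a) (lyap x) =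
        (1 - flip x) * (if a then pf * lyap_base ^ u d else lyap_base ^ u d)"
    by (simp add: expectation_trans_unsynced)
  also have "\<dots> \<le> (if a then pf * lyap_base ^ u d else lyap_base ^ u d)"
    using flip_pos[of x] flip_lt_1[of x] one_less_lyap_base ps_le_1
    by (intro mult_left_le_one_le) auto
  also have "\<dots> \<le> (if a then pf * lyap_base ^ Suc d else lyap_base ^ Suc d)"
    using up ps_le_1 by (auto intro: mult_left_mono)
  finally show ?thesis by (simp only: power_Suc mult.assoc)
qed

lemma expectation_trans_lyap_other: "measure_pmf.expectation (trans u p q ps (\<not>x, x, d) a) (lyap x) = 0"
  using expectation_trans_unsynced[of u "\<not>x" d a "lyap x"] by simp

lemma expectation_trans_lyap_le:
  assumes age: "\<And>d. u d \<le> Suc d"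
    and reach: "x0 = xh \<Longrightarrow> d = 0"
    and transmit: "D \<le> d \<Longrightarrow> x0 = x \<Longrightarrow> xh \<noteq> x \<Longrightarrow> a"
  shows "measure_pmf.expectation (trans u p q ps (x0, xh, d) a) (lyap x)
         \<le> lyap_base ^ D + lyap_base + pf * lyap_base * lyap x (x0, xh, d)"
proof -
  have nonneg: "0 \<le> lyap_base ^ D" "0 \<le> lyap_base" "0 \<le> pf * lyap_base * lyap x (x0, xh, d)"
    using one_less_lyap_base ps_le_1 lyap_nonneg[of x "(x0, xh, d)"] by auto
  consider "xh = x0" | "x0 = (\<not>x)" "xh = x" | "x0 = x" "xh = (\<not>x)" by auto
  then show ?thesis
  proof cases
    case 1
    then have "measure_pmf.expectation (trans u p q ps (x0, xh, d) a) (lyap x) \<le> lyap_base"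
      using reach expectation_trans_lyap_synced[OF age, of x0 a x] by simp
    then show ?thesis using nonneg by linarith
  next
    case 2
    then show ?thesis using expectation_trans_lyap_other nonneg by simp
  next
    case 3
    have E: "measure_pmf.expectation (trans u p q ps (x0, xh, d) a) (lyap x)
             \<le> (if a then pf * lyap_base * lyap x (x0, xh, d) else lyap_base ^ Suc d)"
      using expectation_trans_lyap_unsynced[OF age, of x d a] unfolding 3 lyap_unsynced .
    have bD: "0 \<le> lyap_base ^ D" using one_less_lyap_base by simp
    show ?thesis
    proof (cases a)
      case True
      then show ?thesis using E[unfolded if_P[OF True]] nonneg bD by linarith
    next
      case False
      then have "lyap_base ^ Suc d \<le> lyap_base ^ D"
        using 3 transmit by (intro lyap_base_power_mono) force
      then show ?thesis using E[unfolded if_not_P[OF False]] nonneg by linarith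
    qed
  qed
qed

definition lyap_bound :: "nat \<Rightarrow> real" where
  "lyap_bound D = (lyap_base ^ D + lyap_base) / (1 - pf * lyap_base)"

lemma lyap_bound_nonneg: "0 \<le> lyap_bound D"
  using one_less_lyap_base pf_lyap_base_less_1 by (simp add: lyap_bound_def)

lemma expectation_state_pmf_lyap_le:
  assumes age: "\<And>d. u d \<le> Suc d" and transmit: "\<And>t d. D \<le> d \<Longrightarrow> g t (x, \<not>x, d)"
  shows "measure_pmf.expectation (state_pmf u p q ps g t) (lyap x) \<le> lyap_bound D"
proof (induction t)
  case 0
  then show ?case using lyap_bound_nonneg by (simp add: lyap_def s_init_def)
next
  case (Suc t)
  let ?E = "measure_pmf.expectation (state_pmf u p q ps g t)"
  have "measure_pmf.expectation (state_pmf u p q ps g (Suc t)) (lyap x) =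
        ?E (\<lambda>s. measure_pmf.expectation (trans u p q ps s (g t s)) (lyap x))"
    by (simp add: expectation_bind_pmf_finite finite_set_state_pmf finite_set_trans)
  also have "\<dots> \<le> ?E (\<lambda>s. lyap_base ^ D + lyap_base + pf * lyap_base * lyap x s)"
  proof (rule expectation_mono_pmf_finite[OF finite_set_state_pmf])
    fix s assume s: "s \<in> set_pmf (state_pmf u p q ps g t)"
    obtain x0 xh d where sd: "s = (x0, xh, d)" by (cases s)
    show "measure_pmf.expectation (trans u p q ps s (g t s)) (lyap x)
          \<le> lyap_base ^ D + lyap_base + pf * lyap_base * lyap x s"
      unfolding sd
      by (rule expectation_trans_lyap_le[OF age])
        (use s sd synced_state_pmf_age_zero transmit in auto)
  qed
  also have "\<dots> = lyap_base ^ D + lyap_base + pf * lyap_base * ?E (lyap x)"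
    by (simp add: expectation_add_pmf_finite finite_set_state_pmf)
  also have "\<dots> \<le> lyap_base ^ D + lyap_base + pf * lyap_base * lyap_bound D"
    using Suc ps_le_1 one_less_lyap_base by (intro add_left_mono mult_left_mono) auto
  also have "\<dots> = lyap_bound D"
    using pf_lyap_base_less_1 by (simp add: lyap_bound_def field_simps)
  finally show ?case .
qed

lemma weight_expectation_lyap_le:
  assumes age: "\<And>d. u d \<le> Suc d"
    and transmit: "\<And>x t d. 0 < weight x \<Longrightarrow> D \<le> d \<Longrightarrow> g t (x, \<not>x, d)"
  shows "weight x * measure_pmf.expectation (state_pmf u p q ps g t) (lyap x) \<le> lyap_bound D"
proof (cases "weight x = 0")
  case False
  then have "measure_pmf.expectation (state_pmf u p q ps g t) (lyap x) \<le> lyap_bound D"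
    using weight_nonneg[of x] by (intro expectation_state_pmf_lyap_le[OF age] transmit) auto
  then show ?thesis
    using weight_nonneg[of x] weight_le_1[of x] lyap_bound_nonneg
    by (intro unit_mult_le) auto
qed (simp add: lyap_bound_nonneg)

text \<open>For \<open>N = 0\<close> the excess is the whole cost, so one bound controls both.\<close>

definition excess :: "nat \<Rightarrow> st \<Rightarrow> real" where
  "excess N s = cost \<beta> s - cost \<beta> (trunc_state N s)"

lemma excess_0: "excess 0 = cost \<beta>"
  by (rule ext) (auto simp: excess_def trunc_state_def cost_def split: prod.splits)

lemma excess_nonneg: "0 \<le> excess N s"
  using beta_nonneg beta_le_1
  by (auto simp: excess_def trunc_state_def cost_def intro!: mult_left_mono split: prod.splits)

lemma excess_le_lyap:
  "excess N s \<le> (weight True * lyap True s + weight False * lyap False s) / (lyap_base ^ N * (lyap_base - 1))"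
proof -
  obtain x0 xh d where s: "s = (x0, xh, d)" by (cases s)
  have b: "0 < lyap_base - 1" "0 < lyap_base ^ N" using one_less_lyap_base by auto
  have rhs: "0 \<le> (weight True * lyap True s + weight False * lyap False s) / (lyap_base ^ N * (lyap_base - 1))"
    using b weight_nonneg lyap_nonneg by (intro divide_nonneg_pos add_nonneg_nonneg mult_nonneg_nonneg) auto
  show ?thesis
  proof (cases "xh = x0 \<or> d \<le> N")
    case True
    then show ?thesis using s rhs by (auto simp: excess_def trunc_state_def)
  next
    case False
    then have xh: "xh = (\<not>x0)" and dN: "d = N + (d - N)" by auto
    have "excess N s = weight x0 * (d - N)"
      using s xh False by (simp add: excess_def trunc_state_def of_nat_diff right_diff_distrib)
    also have "\<dots> \<le> weight x0 * (lyap_base ^ (d - N) / (lyap_base - 1))"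
      using real_le_power_div[OF one_less_lyap_base] weight_nonneg by (intro mult_left_mono) auto
    also have "\<dots> = weight x0 * (lyap_base ^ d / (lyap_base ^ N * (lyap_base - 1)))"
      using b by (subst dN) (simp add: power_add)
    also have "\<dots> = (weight True * lyap True s + weight False * lyap False s) / (lyap_base ^ N * (lyap_base - 1))"
      using s xh by (cases x0) (auto simp: lyap_def)
    finally show ?thesis .
  qed
qed

lemma expectation_excess_le:
  assumes age: "\<And>d. u d \<le> Suc d"
    and transmit: "\<And>x t d. 0 < weight x \<Longrightarrow> D \<le> d \<Longrightarrow> g t (x, \<not>x, d)"
  shows "measure_pmf.expectation (state_pmf u p q ps g t) (excess N)
         \<le> 2 * lyap_bound D / (lyap_base ^ N * (lyap_base - 1))"
proof -
  let ?E = "measure_pmf.expectation (state_pmf u p q ps g t)"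
  have b: "0 < lyap_base ^ N * (lyap_base - 1)" using one_less_lyap_base by simp
  have "?E (excess N) \<le> ?E (\<lambda>s. (weight True * lyap True s + weight False * lyap False s)
                                  / (lyap_base ^ N * (lyap_base - 1)))"
    by (rule expectation_mono_pmf_finite[OF finite_set_state_pmf]) (rule excess_le_lyap)
  also have "\<dots> = (weight True * ?E (lyap True) + weight False * ?E (lyap False))
                   / (lyap_base ^ N * (lyap_base - 1))"
    by (simp add: expectation_add_pmf_finite finite_set_state_pmf)
  also have "\<dots> \<le> (lyap_bound D + lyap_bound D) / (lyap_base ^ N * (lyap_base - 1))"
    using b weight_expectation_lyap_le[where g = g and D = D, OF age transmit]
    by (intro divide_right_mono add_mono) auto
  finally show ?thesis by simp
qed

text \<open>Restart every \<open>T\<close> stages, acting optimally for the remaining horizon of the current block.\<close>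

definition periodic_act :: "(nat \<Rightarrow> nat) \<Rightarrow> nat \<Rightarrow> nat \<Rightarrow> st \<Rightarrow> bool" where
  "periodic_act u T t s = opt_act u (T - Suc (t mod T)) s"

lemma expectation_state_pmf_val_Suc:
  assumes "\<And>s. g t s = opt_act u k s"
  shows "measure_pmf.expectation (state_pmf u p q ps g t) (val u (Suc k)) =
           measure_pmf.expectation (state_pmf u p q ps g t) (\<lambda>s. stage_cost u p q ps \<beta> lam s (g t s))
         + measure_pmf.expectation (state_pmf u p q ps g (Suc t)) (val u k)"
proof -
  have "val u (Suc k) = (\<lambda>s. stage_cost u p q ps \<beta> lam s (g t s)
                              + measure_pmf.expectation (trans u p q ps s (g t s)) (val u k))"
    by (rule ext) (simp add: val_Suc_opt_act assms qval_def)
  then show ?thesis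
    by (simp add: expectation_add_pmf_finite finite_set_state_pmf expectation_bind_pmf_finite
        finite_set_trans)
qed

lemma expectation_val_periodic_block:
  assumes T: "0 < T"
  shows "measure_pmf.expectation (state_pmf u p q ps (periodic_act u T) (b * T)) (val u T) =
         (\<Sum>i<T. exp_stage u p q ps \<beta> lam (markov_policy (periodic_act u T)) (b * T + i))"
proof -
  let ?E = "\<lambda>t. measure_pmf.expectation (state_pmf u p q ps (periodic_act u T) t)"
  have "?E (b * T) (val u T) =
        (\<Sum>j<i. exp_stage u p q ps \<beta> lam (markov_policy (periodic_act u T)) (b * T + j))
        + ?E (b * T + i) (val u (T - i))" if "i \<le> T" for i
    using that
  proof (induction i)
    case (Suc i)
    then have "(b * T + i) mod T = i" "T - i = Suc (T - Suc i)" by auto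
    then have "?E (b * T + i) (val u (T - i)) =
               exp_stage u p q ps \<beta> lam (markov_policy (periodic_act u T)) (b * T + i)
               + ?E (b * T + Suc i) (val u (T - Suc i))"
      using expectation_state_pmf_val_Suc[of "periodic_act u T" "b * T + i" u "T - Suc i"]
      by (simp add: periodic_act_def exp_stage_markov_policy)
    then show ?case using Suc by simp
  qed simp
  from this[of T] show ?thesis by (simp add: val.simps(1)[abs_def])
qed

lemma sum_exp_stage_periodic:
  assumes "0 < T"
  shows "(\<Sum>t<j * T. exp_stage u p q ps \<beta> lam (markov_policy (periodic_act u T)) t) =
         (\<Sum>b<j. measure_pmf.expectation (state_pmf u p q ps (periodic_act u T) (b * T)) (val u T))"
  by (simp add: expectation_val_periodic_block[OF assms] sum.nat_group[symmetric]
      sum.atLeastLessThan_shift_0 atLeast0LessThan)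

lemma val_le_val_init:
  assumes age: "\<And>d. u d \<le> Suc d" and reach: "x0 = xh \<Longrightarrow> d = 0"
  shows "val u k (x0, xh, d) \<le> val u k s_init + span_swap + span_unsync + span_slope * cost \<beta> (x0, xh, d)"
proof -
  note span = span_bounds[OF age]
  have sync: "val u k (y, y, 0) \<le> val u k s_init + span_swap" for y
    using span_bounds_swap[OF span, where y = True] span_swap_nonneg by (cases y) (auto simp: s_init_def)
  show ?thesis
  proof (cases "xh = x0")
    case True
    then show ?thesis using reach sync[of x0] span_unsync_nonneg by simp
  next
    case False
    then have "xh = (\<not>x0)" by auto
    then show ?thesis
      using span_bounds_unsync[OF span, where y = x0 and d = d and k = k] sync[of x0]
      by (simp add: algebra_simps)
  qed
qed

text \<open>When \<open>weight x = 0\<close> the quotient below is \<open>0\<close> (division by zero); such states never need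
  a transmission, so this is harmless.\<close>

definition transmit_age :: nat where
  "transmit_age = max (nat \<lceil>transmit_threshold / weight True\<rceil>) (nat \<lceil>transmit_threshold / weight False\<rceil>)"

lemma transmit_threshold_le:
  assumes "0 < weight x" "transmit_age \<le> n"
  shows "transmit_threshold \<le> weight x * n"
proof -
  have "transmit_threshold / weight x \<le> nat \<lceil>transmit_threshold / weight x\<rceil>"
    by (rule real_nat_ceiling_ge)
  also have "\<dots> \<le> n" using assms(2) by (cases x) (auto simp: transmit_age_def)
  finally show ?thesis using assms(1) by (simp add: field_simps)
qed

lemma periodic_act_transmits:
  assumes "transmit_age \<le> N" "0 < weight x" "transmit_age \<le> d"
  shows "periodic_act (trunc_age N) T t (x, \<not>x, d)"
  unfolding periodic_act_def
  by (rule opt_act_unsynced) (use assms in \<open>auto intro: transmit_threshold_le\<close>)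

definition block_overhead :: real where
  "block_overhead = span_swap + span_unsync + span_slope * (2 * lyap_bound transmit_age / (lyap_base - 1))"

lemma block_overhead_nonneg: "0 \<le> block_overhead"
  unfolding block_overhead_def
  using span_swap_nonneg span_unsync_nonneg span_slope_pos lyap_bound_nonneg one_less_lyap_base
  by (intro add_nonneg_nonneg mult_nonneg_nonneg divide_nonneg_pos) auto

lemma expectation_val_periodic_le:
  assumes "transmit_age \<le> N"
  shows "measure_pmf.expectation (state_pmf (trunc_age N) p q ps (periodic_act (trunc_age N) T) t)
           (val (trunc_age N) T)
         \<le> val (trunc_age N) T s_init + block_overhead"
proof -
  let ?u = "trunc_age N" and ?g = "periodic_act (trunc_age N) T"
  let ?E = "measure_pmf.expectation (state_pmf ?u p q ps ?g t)"
  have "?E (val ?u T) \<le> ?E (\<lambda>s. (val ?u T s_init + span_swap + span_unsync) + span_slope * cost \<beta> s)"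
  proof (rule expectation_mono_pmf_finite[OF finite_set_state_pmf])
    fix s assume s: "s \<in> set_pmf (state_pmf ?u p q ps ?g t)"
    obtain x0 xh d where sd: "s = (x0, xh, d)" by (cases s)
    show "val ?u T s \<le> (val ?u T s_init + span_swap + span_unsync) + span_slope * cost \<beta> s"
      unfolding sd by (rule val_le_val_init) (use synced_state_pmf_age_zero s sd in auto)
  qed
  also have "\<dots> = (val ?u T s_init + span_swap + span_unsync) + span_slope * ?E (cost \<beta>)"
    by (simp add: expectation_add_pmf_finite finite_set_state_pmf)
  also have "\<dots> \<le> (val ?u T s_init + span_swap + span_unsync)
                   + span_slope * (2 * lyap_bound transmit_age / (lyap_base - 1))"
  proof -
    have "?E (excess 0) \<le> 2 * lyap_bound transmit_age / (lyap_base - 1)"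
      using expectation_excess_le[of ?u transmit_age ?g t 0] periodic_act_transmits[OF assms] by simp
    then show ?thesis using span_slope_pos unfolding excess_0 by (intro add_left_mono mult_left_mono) auto
  qed
  finally show ?thesis by (simp add: block_overhead_def algebra_simps)
qed

lemma sum_exp_stage_periodic_le:
  assumes "transmit_age \<le> N" and T: "0 < T"
  shows "(\<Sum>t<M. exp_stage (trunc_age N) p q ps \<beta> lam (markov_policy (periodic_act (trunc_age N) T)) t)
         \<le> (real M / real T + 1) * (val (trunc_age N) T s_init + block_overhead)"
proof -
  let ?u = "trunc_age N"
  define j where "j = M div T + 1"
  define C where "C = val ?u T s_init + block_overhead"
  have "M \<le> j * T"
    using mod_less_divisor[OF T, of M] div_mult_mod_eq[of M T] unfolding j_def distrib_right by linarith
  then have "(\<Sum>t<M. exp_stage ?u p q ps \<beta> lam (markov_policy (periodic_act ?u T)) t)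
             \<le> (\<Sum>t<j * T. exp_stage ?u p q ps \<beta> lam (markov_policy (periodic_act ?u T)) t)"
    by (intro sum_mono2) (auto simp: exp_stage_nonneg)
  also have "\<dots> \<le> (\<Sum>b<j. C)"
    unfolding sum_exp_stage_periodic[OF T]
    by (intro sum_mono) (use expectation_val_periodic_le[OF assms(1)] in \<open>simp add: C_def\<close>)
  also have "\<dots> = real j * C" by simp
  also have "\<dots> \<le> (real M / real T + 1) * C"
    using of_nat_div_le_of_nat[of M T] val_nonneg[of ?u T s_init] block_overhead_nonneg
    by (intro mult_right_mono) (auto simp: j_def C_def)
  finally show ?thesis by (simp add: C_def)
qed

section \<open>Truncating the age\<close>

lemma stage_cost_trunc_state:
  "stage_cost Suc p q ps \<beta> lam s a =
     stage_cost (trunc_age N) p q ps \<beta> lam (trunc_state N s) a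
   + measure_pmf.expectation (trans Suc p q ps s a) (excess N)"
proof -
  have "measure_pmf.expectation (trans Suc p q ps s a) (cost \<beta>) =
        measure_pmf.expectation (trans Suc p q ps s a) (\<lambda>s. cost \<beta> (trunc_state N s) + excess N s)"
    by (simp add: excess_def)
  also have "\<dots> = measure_pmf.expectation (map_pmf (trunc_state N) (trans Suc p q ps s a)) (cost \<beta>)
                 + measure_pmf.expectation (trans Suc p q ps s a) (excess N)"
    by (simp add: expectation_add_pmf_finite finite_set_trans)
  finally show ?thesis unfolding stage_cost_def map_trunc_state_trans by simp
qed

lemma exp_stage_trunc_policy:
  "exp_stage Suc p q ps \<beta> lam (markov_policy (\<lambda>t s. g t (trunc_state N s))) t =
     exp_stage (trunc_age N) p q ps \<beta> lam (markov_policy g) t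
   + measure_pmf.expectation (state_pmf Suc p q ps (\<lambda>t s. g t (trunc_state N s)) (Suc t)) (excess N)"
proof -
  let ?m = "state_pmf Suc p q ps (\<lambda>t s. g t (trunc_state N s)) t"
  have "exp_stage Suc p q ps \<beta> lam (markov_policy (\<lambda>t s. g t (trunc_state N s))) t =
        measure_pmf.expectation ?m
          (\<lambda>s. stage_cost (trunc_age N) p q ps \<beta> lam (trunc_state N s) (g t (trunc_state N s))
             + measure_pmf.expectation (trans Suc p q ps s (g t (trunc_state N s))) (excess N))"
    unfolding exp_stage_markov_policy by (subst stage_cost_trunc_state[where N = N]) simp
  also have "\<dots> = measure_pmf.expectation (map_pmf (trunc_state N) ?m)
                     (\<lambda>s. stage_cost (trunc_age N) p q ps \<beta> lam s (g t s))
                 + measure_pmf.expectation (state_pmf Suc p q ps (\<lambda>t s. g t (trunc_state N s)) (Suc t))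
                     (excess N)"
    by (simp add: expectation_add_pmf_finite finite_set_state_pmf expectation_bind_pmf_finite
        finite_set_trans)
  finally show ?thesis by (simp add: map_trunc_state_state_pmf exp_stage_markov_policy)
qed

lemma val_trunc_le_val: "val (trunc_age N) k (trunc_state N s) \<le> val Suc k s"
proof (induction k arbitrary: s)
  case (Suc k)
  have "qval (trunc_age N) k (trunc_state N s) a \<le> qval Suc k s a" for a
  proof -
    have "qval (trunc_age N) k (trunc_state N s) a =
          measure_pmf.expectation (trans Suc p q ps s a)
            (\<lambda>s'. cost \<beta> (trunc_state N s') + val (trunc_age N) k (trunc_state N s'))
          + (if a then lam else 0)"
      by (simp add: qval_eq flip: map_trunc_state_trans)
    also have "\<dots> \<le> measure_pmf.expectation (trans Suc p q ps s a) (\<lambda>s'. cost \<beta> s' + val Suc k s')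
                   + (if a then lam else 0)"
      using Suc excess_nonneg
      by (intro add_right_mono expectation_mono_pmf_finite[OF finite_set_trans] add_mono)
        (auto simp: excess_def)
    also have "\<dots> = qval Suc k s a" by (simp add: qval_eq)
    finally show ?thesis .
  qed
  from this[of False] this[of True] show ?case by (auto simp: val_Suc min_def)
qed simp

lemma avg_cost_le:
  assumes "\<And>M. (\<Sum>t<M. exp_stage u p q ps \<beta> lam \<pi> t) \<le> (real M / real T + 1) * C + real M * e"
    and "0 < T"
  shows "avg_cost u p q ps \<beta> lam \<pi> \<le> ereal (C / T + e)"
  unfolding avg_cost_def
proof (rule limsup_le_of_bound[where b = C])
  fix M :: nat assume M: "1 \<le> M"
  have "(\<Sum>t<M. exp_stage u p q ps \<beta> lam \<pi> t) / real M \<le> ((real M / real T + 1) * C + real M * e) / real M"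
    using assms(1)[of M] M by (intro divide_right_mono) auto
  also have "\<dots> = C / T + e + C / real M" using M assms(2) by (simp add: field_simps)
  finally show "(\<Sum>t<M. exp_stage u p q ps \<beta> lam \<pi> t) / real M \<le> C / T + e + C / real M" .
qed

lemma opt_cost_nonneg: "0 \<le> opt_cost u p q ps \<beta> lam"
  unfolding opt_cost_def avg_cost_def
  by (intro INF_greatest le_Limsup)
    (auto intro!: always_eventually divide_nonneg_nonneg sum_nonneg exp_stage_nonneg)

lemma opt_cost_ge:
  assumes "\<And>T. 1 \<le> T \<Longrightarrow> x \<le> ereal ((val u T s_init + b) / T)"
  shows "x \<le> opt_cost u p q ps \<beta> lam"
proof (cases x)
  case (real a)
  show ?thesis
    unfolding real opt_cost_def avg_cost_def
  proof (intro INF_greatest limsup_ge_of_bound[where b = b])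
    fix \<pi> and T :: nat assume \<pi>: "\<pi> \<in> admissible" and T: "1 \<le> T"
    have "a - b / T \<le> val u T s_init / T"
      using assms[OF T] real T by (simp add: add_divide_distrib)
    also have "\<dots> \<le> (\<Sum>t<T. exp_stage u p q ps \<beta> lam \<pi> t) / T"
      using val_le_sum_exp_stage[OF \<pi>] by (intro divide_right_mono) auto
    finally show "a - b / T \<le> (\<Sum>t<T. exp_stage u p q ps \<beta> lam \<pi> t) / T" .
  qed
next
  case PInf
  then show ?thesis using assms[of 1] by simp
qed simp

lemma L_trunc_le:
  assumes "transmit_age \<le> N" "0 < T"
  shows "L_trunc N p q ps \<beta> lam \<le> ereal ((val (trunc_age N) T s_init + block_overhead) / T)"
proof -
  have "L_trunc N p q ps \<beta> lam
        \<le> avg_cost (trunc_age N) p q ps \<beta> lam (markov_policy (periodic_act (trunc_age N) T))"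
    unfolding L_trunc_def opt_cost_def by (rule INF_lower[OF markov_policy_admissible])
  also have "\<dots> \<le> ereal ((val (trunc_age N) T s_init + block_overhead) / T + 0)"
    by (rule avg_cost_le[OF _ assms(2)]) (use sum_exp_stage_periodic_le[OF assms] in simp)
  finally show ?thesis by simp
qed

definition trunc_error :: "nat \<Rightarrow> real" where
  "trunc_error N = 2 * lyap_bound transmit_age / (lyap_base ^ N * (lyap_base - 1))"

lemma trunc_error_tendsto_0: "trunc_error \<longlonglongrightarrow> 0"
proof -
  have "trunc_error = (\<lambda>N. (2 * lyap_bound transmit_age / (lyap_base - 1)) * (1 / lyap_base) ^ N)"
    by (rule ext) (simp add: trunc_error_def power_one_over field_simps)
  moreover have "(\<lambda>N. (1 / lyap_base) ^ N) \<longlonglongrightarrow> 0"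
    using one_less_lyap_base by (intro LIMSEQ_power_zero) simp
  ultimately show ?thesis using tendsto_mult_right_zero by metis
qed

lemma L_orig_le:
  assumes "transmit_age \<le> N" "0 < T"
  shows "L_orig p q ps \<beta> lam \<le> ereal ((val (trunc_age N) T s_init + block_overhead) / T + trunc_error N)"
proof -
  define g where "g = (\<lambda>t s. periodic_act (trunc_age N) T t (trunc_state N s))"
  have transmit: "g t (x, \<not>x, d)" if "0 < weight x" "transmit_age \<le> d" for x t d
    using periodic_act_transmits[OF assms(1) that(1)] that(2) assms(1)
    by (simp add: g_def trunc_state_def)
  have "L_orig p q ps \<beta> lam \<le> avg_cost Suc p q ps \<beta> lam (markov_policy g)"
    unfolding L_orig_def opt_cost_def by (rule INF_lower[OF markov_policy_admissible])
  also have "\<dots> \<le> ereal ((val (trunc_age N) T s_init + block_overhead) / T + trunc_error N)"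
  proof (rule avg_cost_le[OF _ assms(2)])
    fix M
    have "(\<Sum>t<M. exp_stage Suc p q ps \<beta> lam (markov_policy g) t) =
            (\<Sum>t<M. exp_stage (trunc_age N) p q ps \<beta> lam (markov_policy (periodic_act (trunc_age N) T)) t)
          + (\<Sum>t<M. measure_pmf.expectation (state_pmf Suc p q ps g (Suc t)) (excess N))"
      unfolding g_def exp_stage_trunc_policy by (simp add: sum.distrib)
    also have "\<dots> \<le> (real M / real T + 1) * (val (trunc_age N) T s_init + block_overhead)
                   + (\<Sum>t<M. trunc_error N)"
      using sum_exp_stage_periodic_le[OF assms] expectation_excess_le[where u = Suc and g = g and D = transmit_age, OF order_refl transmit]
      by (intro add_mono sum_mono) (auto simp: trunc_error_def simp del: state_pmf.simps)
    finally show "(\<Sum>t<M. exp_stage Suc p q ps \<beta> lam (markov_policy g) t)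
        \<le> (real M / real T + 1) * (val (trunc_age N) T s_init + block_overhead) + real M * trunc_error N"
      by simp
  qed
  finally show ?thesis .
qed

lemma L_orig_finite: "\<bar>L_orig p q ps \<beta> lam\<bar> \<noteq> \<infinity>"
  using L_orig_le[of transmit_age 1] opt_cost_nonneg[of Suc]
  by (cases "L_orig p q ps \<beta> lam") (auto simp: L_orig_def)

lemma L_trunc_le_L_orig:
  assumes "transmit_age \<le> N"
  shows "L_trunc N p q ps \<beta> lam \<le> L_orig p q ps \<beta> lam"
  unfolding L_orig_def
proof (rule opt_cost_ge[where b = block_overhead])
  fix T :: nat assume "1 \<le> T"
  then have "L_trunc N p q ps \<beta> lam \<le> ereal ((val (trunc_age N) T s_init + block_overhead) / T)"
    using L_trunc_le[OF assms] by simp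
  also have "\<dots> \<le> ereal ((val Suc T s_init + block_overhead) / T)"
    using val_trunc_le_val[of N T s_init] by (simp add: divide_right_mono)
  finally show "L_trunc N p q ps \<beta> lam \<le> ereal ((val Suc T s_init + block_overhead) / T)" .
qed

lemma L_orig_le_L_trunc:
  assumes "transmit_age \<le> N"
  shows "L_orig p q ps \<beta> lam - ereal (trunc_error N) \<le> L_trunc N p q ps \<beta> lam"
  unfolding L_trunc_def
proof (rule opt_cost_ge[where b = block_overhead])
  fix T :: nat assume "1 \<le> T"
  then show "L_orig p q ps \<beta> lam - ereal (trunc_error N)
             \<le> ereal ((val (trunc_age N) T s_init + block_overhead) / T)"
    using L_orig_le[OF assms, of T] by (cases "L_orig p q ps \<beta> lam") auto
qed

end

theorem theorem4:
  fixes p q ps \<beta> lam :: real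
  assumes "0 < p" "p < 1" "0 < q" "q < 1" "0 < ps" "ps \<le> 1"
    and "0 \<le> \<beta>" "\<beta> \<le> 1" "0 \<le> lam"
  shows "(\<lambda>N. L_trunc N p q ps \<beta> lam) \<longlonglongrightarrow> L_orig p q ps \<beta> lam"
proof -
  interpret aoii_model p q ps \<beta> lam using assms by unfold_locales
  obtain lo where lo: "L_orig p q ps \<beta> lam = ereal lo"
    using L_orig_finite by (cases "L_orig p q ps \<beta> lam") auto
  have lower: "\<forall>\<^sub>F N in sequentially. ereal (lo - trunc_error N) \<le> L_trunc N p q ps \<beta> lam"
    using L_orig_le_L_trunc lo by (auto intro: eventually_sequentiallyI[of transmit_age])
  have upper: "\<forall>\<^sub>F N in sequentially. L_trunc N p q ps \<beta> lam \<le> L_orig p q ps \<beta> lam"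
    using L_trunc_le_L_orig by (auto intro: eventually_sequentiallyI[of transmit_age])
  have "(\<lambda>N. ereal (lo - trunc_error N)) \<longlonglongrightarrow> L_orig p q ps \<beta> lam"
    unfolding lo using tendsto_diff[OF tendsto_const trunc_error_tendsto_0, of lo]
    by (simp add: tendsto_ereal)
  then show ?thesis by (rule tendsto_sandwich[OF lower upper _ tendsto_const])
qed

end
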